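(* Let $p\in[1,\infty)$ and suppose $\lim_{|x|\to\infty}\int_{-\infty}^{\infty}G(x,t)\,dt=0$. For $f\in L_p(\mathbb R)$ put $y_f=Gf$. Then $$\lim_{\eta\to0}\ \sup_{\|f\|_p\le1}\|y_f(\cdot+\eta)-y_f(\cdot)\|_p=0.$$
   Context: Let $q:\mathbb R\to\mathbb R$ be measurable with $q\in L_1^{\mathrm{loc}}(\mathbb R)$ and $q(x)\ge1$ a.e. A principal fundamental system of solutions (PFSS) of $z''=q(x)z$ is a pair $u,v$ of solutions ($C^1$, derivative locally absolutely continuous, equation a.e.) such that for all $x$: $u>0$, $v>0$, $u'<0$, $v'>0$, $v'u-u'v=1$, $u(x)=v(x)\int_x^\infty v(t)^{-2}dt$, and $u,u'\to0$ as $x\to\infty$, $v,v'\to0$ as $x\to-\infty$, $v,v'\to\infty$ as $x\to\infty$, $u,|u'|\to\infty$ as $x\to-\infty$. Fix a PFSS $\{u,v\}$. The Green function is $G(x,t)=u(x)v(t)$ for $x\ge t$ and $G(x,t)=u(t)v(x)$ for $x\le t$, and $(Gf)(x)=\int_{-\infty}^\infty G(x,t)f(t)\,dt$. *)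

theory Defs
  imports "HOL-Analysis.Analysis"
begin

definition admissible_q :: "(real \<Rightarrow> real) \<Rightarrow> bool" where
  "admissible_q q \<longleftrightarrow> q \<in> borel_measurable lborel
     \<and> (\<forall>a b. set_integrable lborel {a..b} q)
     \<and> (AE x in lborel. 1 \<le> q x)"

text \<open>z is a solution of z'' = q z with derivative z': z is C^1 with derivative z',
  and z' is locally absolutely continuous with z'' = q z a.e., i.e. z' is the
  indefinite integral of q z.\<close>
definition is_solution :: "(real \<Rightarrow> real) \<Rightarrow> (real \<Rightarrow> real) \<Rightarrow> (real \<Rightarrow> real) \<Rightarrow> bool" where
  "is_solution q z z' \<longleftrightarrow>
     (\<forall>x. (z has_real_derivative z' x) (at x)) \<and> continuous_on UNIV z'
     \<and> (\<forall>a b. set_integrable lborel {a..b} (\<lambda>t. q t * z t))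
     \<and> (\<forall>a x. z' x - z' a = (LBINT t=a..x. q t * z t))"

definition PFSS :: "(real \<Rightarrow> real) \<Rightarrow> (real \<Rightarrow> real) \<Rightarrow> (real \<Rightarrow> real)
                     \<Rightarrow> (real \<Rightarrow> real) \<Rightarrow> (real \<Rightarrow> real) \<Rightarrow> bool" where
  "PFSS q u u' v v' \<longleftrightarrow>
     is_solution q u u' \<and> is_solution q v v'
     \<and> (\<forall>x. u x > 0 \<and> v x > 0 \<and> u' x < 0 \<and> v' x > 0 \<and> v' x * u x - u' x * v x = 1)
     \<and> (\<forall>x. set_integrable lborel {x..} (\<lambda>t. 1 / (v t)\<^sup>2)
            \<and> u x = v x * (\<integral>t\<in>{x..}. 1 / (v t)\<^sup>2 \<partial>lborel))
     \<and> (u \<longlongrightarrow> 0) at_top \<and> (u' \<longlongrightarrow> 0) at_top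
     \<and> (v \<longlongrightarrow> 0) at_bot \<and> (v' \<longlongrightarrow> 0) at_bot
     \<and> filterlim v at_top at_top \<and> filterlim v' at_top at_top
     \<and> filterlim u at_top at_bot \<and> filterlim (\<lambda>x. \<bar>u' x\<bar>) at_top at_bot"

definition green :: "(real \<Rightarrow> real) \<Rightarrow> (real \<Rightarrow> real) \<Rightarrow> real \<Rightarrow> real \<Rightarrow> real" where
  "green u v x t = (if t \<le> x then u x * v t else u t * v x)"

definition green_op :: "(real \<Rightarrow> real) \<Rightarrow> (real \<Rightarrow> real) \<Rightarrow> (real \<Rightarrow> real) \<Rightarrow> real \<Rightarrow> real" where
  "green_op u v f x = (\<integral>t. green u v x t * f t \<partial>lborel)"

text \<open>p-th power of the L_p norm, as an extended nonnegative real
  (so \<open>Lp_pow p g \<le> c^p\<close> iff \<open>\<parallel>g\<parallel>_p \<le> c\<close>, including the value \<infinity>).\<close>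
definition Lp_pow :: "real \<Rightarrow> (real \<Rightarrow> real) \<Rightarrow> ennreal" where
  "Lp_pow p g = (\<integral>\<^sup>+x. ennreal (\<bar>g x\<bar> powr p) \<partial>lborel)"

end

(*
  Write K(x, t) = G(x + eta, t) - G(x, t), so that y_f(x + eta) - y_f(x) = (K f)(x). By Schur's test,
  ||K f||_p <= c ||f||_p as soon as every row and every column of K has L_1 norm at most c, so it
  suffices to make all these norms uniformly small for small |eta|.

  Since q >= 1, a positive solution z satisfies z'' >= z; hence the integral of v over (-inf, x] is
  at most v'(x) and that of u over [x, inf) at most -u'(x), and the Wronskian identity bounds the
  integral of G(x, .) by 1. Far out, a row or column norm of K is at most a sum of two integrals of
  G(x, .) (G is symmetric), which are small by hypothesis. On a compact set, monotonicity of u and v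
  splits |K| into three pieces controlled by the moduli of continuity of u and v and by eta; along
  columns the first two pieces telescope.
*)
theory Submission
  imports Defs
begin

section \<open>Integration on the real line\<close>

lemma nn_integral_lborel_shift:
  fixes F :: "real \<Rightarrow> ennreal"
  assumes [measurable]: "F \<in> borel_measurable borel"
  shows "(\<integral>\<^sup>+x. F (x + c) \<partial>lborel) = (\<integral>\<^sup>+x. F x \<partial>lborel)"
  using nn_integral_real_affine[of F 1 c] by (simp add: add.commute)

lemma nn_integral_indicator_UN_le:
  fixes f :: "real \<Rightarrow> ennreal"
  assumes [measurable]: "f \<in> borel_measurable borel" "\<And>n. A n \<in> sets borel"
    and "incseq A" and bound: "\<And>n. (\<integral>\<^sup>+t. f t * indicator (A n) t \<partial>lborel) \<le> C"
  shows "(\<integral>\<^sup>+t. f t * indicator (\<Union>n. A n) t \<partial>lborel) \<le> C"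
proof -
  have "indicator (\<Union>n. A n) t = (SUP n. indicator (A n) t :: ennreal)" for t
    by (cases "\<exists>n. t \<in> A n") (auto simp: indicator_def intro!: antisym SUP_upper2 SUP_least)
  then have "(\<lambda>t. f t * indicator (\<Union>n. A n) t) = (\<lambda>t. SUP n. f t * indicator (A n) t)"
    by (simp add: SUP_mult_left_ennreal)
  moreover have "incseq (\<lambda>n t. f t * indicator (A n) t)"
    using \<open>incseq A\<close> by (auto simp: incseq_def le_fun_def indicator_def)
  ultimately show ?thesis
    by (simp add: nn_integral_monotone_convergence_SUP SUP_least bound)
qed

lemma nn_integral_atMost_le:
  fixes f :: "real \<Rightarrow> ennreal"
  assumes [measurable]: "f \<in> borel_measurable borel"
    and bound: "\<And>a. a \<le> x \<Longrightarrow> (\<integral>\<^sup>+t. f t * indicator {a..x} t \<partial>lborel) \<le> C"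
  shows "(\<integral>\<^sup>+t. f t * indicator {..x} t \<partial>lborel) \<le> C"
proof -
  have "(\<Union>n. {x - real n..x}) = {..x}"
    by auto (metis add.commute diff_le_eq real_arch_simple)
  moreover have "incseq (\<lambda>n. {x - real n..x})"
    by (auto simp: incseq_def)
  ultimately show ?thesis
    using nn_integral_indicator_UN_le[of f "\<lambda>n. {x - real n..x}" C] bound by simp
qed

lemma nn_integral_atLeast_le:
  fixes f :: "real \<Rightarrow> ennreal"
  assumes [measurable]: "f \<in> borel_measurable borel"
    and bound: "\<And>b. x \<le> b \<Longrightarrow> (\<integral>\<^sup>+t. f t * indicator {x..b} t \<partial>lborel) \<le> C"
  shows "(\<integral>\<^sup>+t. f t * indicator {x..} t \<partial>lborel) \<le> C"
proof -
  have "(\<Union>n. {x..x + real n}) = {x..}"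
    by auto (metis add.commute diff_le_eq real_arch_simple)
  moreover have "incseq (\<lambda>n. {x..x + real n})"
    by (auto simp: incseq_def)
  ultimately show ?thesis
    using nn_integral_indicator_UN_le[of f "\<lambda>n. {x..x + real n}" C] bound by simp
qed

lemma ennreal_mult_indicator: "ennreal (c * indicator A x) = ennreal c * indicator A x"
  by (simp add: indicator_def)

lemma nn_integral_abs_le_sum3:
  fixes k f1 f2 f3 :: "real \<Rightarrow> real"
  assumes [measurable]: "f1 \<in> borel_measurable borel" "f2 \<in> borel_measurable borel" "f3 \<in> borel_measurable borel"
    and nonneg: "\<And>t. 0 \<le> f1 t" "\<And>t. 0 \<le> f2 t" "\<And>t. 0 \<le> f3 t" "0 \<le> c1" "0 \<le> c2" "0 \<le> c3"
    and bound: "\<And>t. \<bar>k t\<bar> \<le> c1 * f1 t + c2 * f2 t + c3 * f3 t"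
    and B1: "(\<integral>\<^sup>+t. ennreal (f1 t) \<partial>lborel) \<le> ennreal B1"
    and B2: "(\<integral>\<^sup>+t. ennreal (f2 t) \<partial>lborel) \<le> ennreal B2"
    and B3: "(\<integral>\<^sup>+t. ennreal (f3 t) \<partial>lborel) \<le> ennreal B3"
    and "0 \<le> B1" "0 \<le> B2" "0 \<le> B3"
  shows "(\<integral>\<^sup>+t. ennreal \<bar>k t\<bar> \<partial>lborel) \<le> ennreal (c1 * B1 + c2 * B2 + c3 * B3)"
proof -
  have "(\<integral>\<^sup>+t. ennreal \<bar>k t\<bar> \<partial>lborel)
      \<le> (\<integral>\<^sup>+t. ennreal c1 * ennreal (f1 t) + ennreal c2 * ennreal (f2 t) + ennreal c3 * ennreal (f3 t) \<partial>lborel)"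
    using bound nonneg by (intro nn_integral_mono) (simp add: ennreal_mult[symmetric] flip: ennreal_plus)
  also have "\<dots> = ennreal c1 * (\<integral>\<^sup>+t. ennreal (f1 t) \<partial>lborel) + ennreal c2 * (\<integral>\<^sup>+t. ennreal (f2 t) \<partial>lborel)
      + ennreal c3 * (\<integral>\<^sup>+t. ennreal (f3 t) \<partial>lborel)"
    by (simp add: nn_integral_add nn_integral_cmult)
  also have "\<dots> \<le> ennreal c1 * ennreal B1 + ennreal c2 * ennreal B2 + ennreal c3 * ennreal B3"
    by (intro add_mono mult_left_mono B1 B2 B3) auto
  also have "\<dots> = ennreal (c1 * B1 + c2 * B2 + c3 * B3)"
    using nonneg \<open>0 \<le> B1\<close> \<open>0 \<le> B2\<close> \<open>0 \<le> B3\<close>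
    by (simp add: ennreal_mult[symmetric] ennreal_plus[symmetric] del: ennreal_plus)
  finally show ?thesis .
qed

lemma nn_integral_antimono_shift_diff_le:
  fixes g :: "real \<Rightarrow> real"
  assumes [measurable]: "g \<in> borel_measurable borel" and "antimono g" and g: "\<And>x. 0 \<le> g x"
    and finite: "(\<integral>\<^sup>+x. ennreal (g x) * indicator {s..} x \<partial>lborel) < \<infinity>" and "0 \<le> \<eta>"
  shows "(\<integral>\<^sup>+x. ennreal (g x - g (x + \<eta>)) * indicator {s..} x \<partial>lborel) \<le> ennreal (\<eta> * g s)"
proof -
  define X where "X = (\<integral>\<^sup>+x. ennreal (g x - g (x + \<eta>)) * indicator {s..} x \<partial>lborel)"
  define Y where "Y = (\<integral>\<^sup>+x. ennreal (g x) * indicator {s + \<eta>..} x \<partial>lborel)"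
  define Z where "Z = (\<integral>\<^sup>+x. ennreal (g x) * indicator {s..<s + \<eta>} x \<partial>lborel)"
  have g_shift: "g (x + \<eta>) \<le> g x" for x
    using \<open>antimono g\<close> \<open>0 \<le> \<eta>\<close> by (simp add: antimonoD)
  have "(\<integral>\<^sup>+x. ennreal (g (x + \<eta>)) * indicator {s..} x \<partial>lborel)
      = (\<integral>\<^sup>+x. ennreal (g (x + \<eta>)) * indicator {s + \<eta>..} (x + \<eta>) \<partial>lborel)"
    by (intro nn_integral_cong) (simp add: indicator_def)
  also have "\<dots> = Y"
    unfolding Y_def by (rule nn_integral_lborel_shift) measurable
  finally have shifted: "(\<integral>\<^sup>+x. ennreal (g (x + \<eta>)) * indicator {s..} x \<partial>lborel) = Y" .
  have "(\<integral>\<^sup>+x. ennreal (g x) * indicator {s..} x \<partial>lborel)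
      = (\<integral>\<^sup>+x. ennreal (g x - g (x + \<eta>)) * indicator {s..} x
           + ennreal (g (x + \<eta>)) * indicator {s..} x \<partial>lborel)"
    using g g_shift by (intro nn_integral_cong) (simp add: indicator_def flip: ennreal_plus)
  also have "\<dots> = X + Y"
    unfolding X_def shifted[symmetric] by (intro nn_integral_add) measurable
  finally have XY: "(\<integral>\<^sup>+x. ennreal (g x) * indicator {s..} x \<partial>lborel) = X + Y" .
  have ZY: "(\<integral>\<^sup>+x. ennreal (g x) * indicator {s..} x \<partial>lborel) = Z + Y"
  proof -
    have "(\<integral>\<^sup>+x. ennreal (g x) * indicator {s..} x \<partial>lborel)
        = (\<integral>\<^sup>+x. ennreal (g x) * indicator {s..<s + \<eta>} x + ennreal (g x) * indicator {s + \<eta>..} x \<partial>lborel)"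
      using \<open>0 \<le> \<eta>\<close> by (intro nn_integral_cong) (simp add: indicator_def)
    also have "\<dots> = Z + Y"
      unfolding Z_def Y_def by (intro nn_integral_add) measurable
    finally show ?thesis .
  qed
  have "Y \<noteq> \<infinity>"
    using finite unfolding ZY by (simp add: less_top[symmetric])
  then have "X = Z"
    using XY ZY ennreal_add_left_cancel[of Y X Z] by (simp add: add.commute)
  also have "Z \<le> (\<integral>\<^sup>+x. ennreal (g s) * indicator {s..<s + \<eta>} x \<partial>lborel)"
    unfolding Z_def using \<open>antimono g\<close>
    by (intro nn_integral_mono) (auto simp: indicator_def antimonoD intro: ennreal_leI)
  also have "\<dots> = ennreal (\<eta> * g s)"
    using \<open>0 \<le> \<eta>\<close> g by (simp add: nn_integral_cmult_indicator ennreal_mult' mult.commute)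
  finally show ?thesis unfolding X_def .
qed

lemma nn_integral_mono_shift_diff_le:
  fixes g :: "real \<Rightarrow> real"
  assumes [measurable]: "g \<in> borel_measurable borel" and "mono g" and g: "\<And>x. 0 \<le> g x"
    and finite: "(\<integral>\<^sup>+x. ennreal (g x) * indicator {..s} x \<partial>lborel) < \<infinity>" and "0 \<le> \<eta>"
  shows "(\<integral>\<^sup>+x. ennreal (g (x + \<eta>) - g x) * indicator {..s} x \<partial>lborel) \<le> ennreal (\<eta> * g (s + \<eta>))"
proof -
  define X where "X = (\<integral>\<^sup>+x. ennreal (g (x + \<eta>) - g x) * indicator {..s} x \<partial>lborel)"
  define A where "A = (\<integral>\<^sup>+x. ennreal (g x) * indicator {..s} x \<partial>lborel)"
  define Z where "Z = (\<integral>\<^sup>+x. ennreal (g x) * indicator {s<..s + \<eta>} x \<partial>lborel)"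
  have g_shift: "g x \<le> g (x + \<eta>)" for x
    using \<open>mono g\<close> \<open>0 \<le> \<eta>\<close> by (simp add: monoD)
  have "(\<integral>\<^sup>+x. ennreal (g x) * indicator {..s + \<eta>} x \<partial>lborel)
      = (\<integral>\<^sup>+x. ennreal (g (x + \<eta>)) * indicator {..s + \<eta>} (x + \<eta>) \<partial>lborel)"
    by (rule nn_integral_lborel_shift[symmetric]) measurable
  also have "\<dots> = (\<integral>\<^sup>+x. ennreal (g (x + \<eta>) - g x) * indicator {..s} x
           + ennreal (g x) * indicator {..s} x \<partial>lborel)"
    using g g_shift by (intro nn_integral_cong) (simp add: indicator_def flip: ennreal_plus)
  also have "\<dots> = X + A"
    unfolding X_def A_def by (intro nn_integral_add) measurable
  finally have XA: "(\<integral>\<^sup>+x. ennreal (g x) * indicator {..s + \<eta>} x \<partial>lborel) = X + A" .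
  have "(\<integral>\<^sup>+x. ennreal (g x) * indicator {..s + \<eta>} x \<partial>lborel)
      = (\<integral>\<^sup>+x. ennreal (g x) * indicator {s<..s + \<eta>} x + ennreal (g x) * indicator {..s} x \<partial>lborel)"
    using \<open>0 \<le> \<eta>\<close> by (intro nn_integral_cong) (simp add: indicator_def)
  also have "\<dots> = Z + A"
    unfolding Z_def A_def by (intro nn_integral_add) measurable
  finally have "X + A = Z + A"
    using XA by simp
  then have "X = Z"
    using finite ennreal_add_left_cancel[of A X Z] unfolding A_def[symmetric] by (auto simp: add.commute)
  also have "Z \<le> (\<integral>\<^sup>+x. ennreal (g (s + \<eta>)) * indicator {s<..s + \<eta>} x \<partial>lborel)"
    unfolding Z_def using \<open>mono g\<close>
    by (intro nn_integral_mono) (auto simp: indicator_def monoD intro: ennreal_leI)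
  also have "\<dots> = ennreal (\<eta> * g (s + \<eta>))"
    using \<open>0 \<le> \<eta>\<close> g by (simp add: nn_integral_cmult_indicator ennreal_mult' mult.commute)
  finally show ?thesis unfolding X_def .
qed

lemma continuous_shift_uniformly_small:
  fixes g :: "real \<Rightarrow> real"
  assumes "continuous_on UNIV g" and "0 < e"
  obtains \<delta> where "0 < \<delta>" "\<And>x \<eta>. \<bar>x\<bar> \<le> R \<Longrightarrow> \<bar>\<eta>\<bar> < \<delta> \<Longrightarrow> \<bar>g (x + \<eta>) - g x\<bar> < e"
proof -
  have "uniformly_continuous_on {-R-1..R+1} g"
    using assms(1) by (intro compact_uniformly_continuous) (auto intro: continuous_on_subset)
  then obtain d where "0 < d"
    and d: "\<And>x x'. x \<in> {-R-1..R+1} \<Longrightarrow> x' \<in> {-R-1..R+1} \<Longrightarrow> dist x' x < d \<Longrightarrow> dist (g x') (g x) < e"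
    using \<open>0 < e\<close> unfolding uniformly_continuous_on_def by metis
  show ?thesis
  proof
    show "0 < min d 1" using \<open>0 < d\<close> by simp
    fix x \<eta> :: real assume "\<bar>x\<bar> \<le> R" "\<bar>\<eta>\<bar> < min d 1"
    then have "x \<in> {-R-1..R+1}" "x + \<eta> \<in> {-R-1..R+1}" "dist (x + \<eta>) x < d"
      by (auto simp: dist_real_def)
    then show "\<bar>g (x + \<eta>) - g x\<bar> < e"
      using d by (simp add: dist_real_def)
  qed
qed

section \<open>Schur's test\<close>

lemma powr_tangent_line_le:
  fixes F l p :: real
  assumes p: "1 \<le> p" and F: "0 \<le> F" and l: "0 < l"
  shows "p * l powr (p - 1) * F \<le> F powr p + (p - 1) * l powr p"
proof (cases "F = 0")
  case True
  then show ?thesis using p by simp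
next
  case False
  then have "F > 0" using F by simp
  have "(F powr p) powr (1/p) * (l powr p) powr (1 - 1/p) \<le> (1/p) * F powr p + (1 - 1/p) * l powr p"
    using p \<open>F > 0\<close> l by (intro Youngs_inequality_0) auto
  moreover have "p * (1 - 1/p) = p - 1"
    using p by (simp add: field_simps)
  then have "(F powr p) powr (1/p) * (l powr p) powr (1 - 1/p) = l powr (p - 1) * F"
    using p \<open>F > 0\<close> by (simp add: powr_powr)
  ultimately show ?thesis using p by (simp add: field_simps)
qed

lemma powr_integral_le_weighted:
  fixes k F :: "real \<Rightarrow> real"
  assumes p: "1 \<le> p" and [measurable]: "k \<in> borel_measurable borel" "F \<in> borel_measurable borel"
    and k: "\<And>t. 0 \<le> k t" and F: "\<And>t. 0 \<le> F t"
    and mass: "(\<integral>\<^sup>+t. ennreal (k t) \<partial>lborel) \<le> ennreal a" and a: "0 < a"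
  shows "ennreal ((\<integral>t. k t * F t \<partial>lborel) powr p)
    \<le> ennreal (a powr (p - 1)) * (\<integral>\<^sup>+t. ennreal (k t * F t powr p) \<partial>lborel)"
proof -
  define I where "I = (\<integral>t. k t * F t \<partial>lborel)"
  have "0 \<le> I" unfolding I_def using k F by (intro integral_nonneg_AE) auto
  consider "I = 0" | "(\<integral>\<^sup>+t. ennreal (k t * F t powr p) \<partial>lborel) = \<infinity>"
    | "0 < I" "(\<integral>\<^sup>+t. ennreal (k t * F t powr p) \<partial>lborel) \<noteq> \<infinity>"
    using \<open>0 \<le> I\<close> by (cases "I = 0") auto
  then show ?thesis
  proof cases
    case 1
    then show ?thesis
      unfolding I_def[symmetric] by simp
  next
    case 2
    then show ?thesis
      using a by (simp add: ennreal_mult_top)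
  next
    case 3
    have int_k: "integrable lborel k"
      using k le_less_trans[OF mass ennreal_less_top] by (intro integrableI_nonneg) auto
    have int_kFp: "integrable lborel (\<lambda>t. k t * F t powr p)"
      using 3 k by (intro integrableI_nonneg) (auto simp: top.not_eq_extremum)
    have int_kF: "integrable lborel (\<lambda>t. k t * F t)"
      using 3 not_integrable_integral_eq unfolding I_def by fastforce
    define B where "B = (\<integral>t. k t * F t powr p \<partial>lborel)"
    have B: "(\<integral>\<^sup>+t. ennreal (k t * F t powr p) \<partial>lborel) = ennreal B"
      unfolding B_def using k by (intro nn_integral_eq_integral int_kFp) auto
    have "(\<integral>t. k t \<partial>lborel) \<le> a"
      using mass k a by (simp add: nn_integral_eq_integral[OF int_k] ennreal_le_iff)
    define l where "l = I / a"
    have "l > 0" using 3 a unfolding l_def by simp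
    \<comment> \<open>integrate the tangent line of \<open>F powr p\<close> at \<open>l = I / a\<close> against \<open>k\<close>\<close>
    have "p * l powr (p - 1) * I = (\<integral>t. p * l powr (p - 1) * (k t * F t) \<partial>lborel)"
      unfolding I_def by simp
    also have "\<dots> \<le> (\<integral>t. k t * F t powr p + (p - 1) * l powr p * k t \<partial>lborel)"
    proof (rule integral_mono)
      show "integrable lborel (\<lambda>t. p * l powr (p - 1) * (k t * F t))"
        using int_kF by simp
      show "integrable lborel (\<lambda>t. k t * F t powr p + (p - 1) * l powr p * k t)"
        using int_kFp int_k by simp
      fix t
      have "k t * (p * l powr (p - 1) * F t) \<le> k t * (F t powr p + (p - 1) * l powr p)"
        using k F p \<open>l > 0\<close> by (intro mult_left_mono powr_tangent_line_le) auto
      then show "p * l powr (p - 1) * (k t * F t) \<le> k t * F t powr p + (p - 1) * l powr p * k t"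
        by (simp add: algebra_simps)
    qed
    also have "\<dots> = B + (p - 1) * l powr p * (\<integral>t. k t \<partial>lborel)"
      unfolding B_def using int_k int_kFp by simp
    also have "\<dots> \<le> B + (p - 1) * l powr p * a"
      using \<open>(\<integral>t. k t \<partial>lborel) \<le> a\<close> p by (intro add_left_mono mult_left_mono) auto
    finally have "p * l powr (p - 1) * I \<le> B + (p - 1) * l powr p * a" .
    moreover define J where "J = I powr p / a powr (p - 1)"
    moreover have "l powr (p - 1) * I = J" "l powr p * a = J"
      using 3 a unfolding l_def J_def by (simp_all add: powr_divide powr_diff)
    ultimately have "p * J \<le> B + (p - 1) * J"
      by (simp add: mult.assoc)
    then have "I powr p / a powr (p - 1) \<le> B"
      unfolding J_def[symmetric] by (simp add: left_diff_distrib)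
    then have "I powr p \<le> a powr (p - 1) * B"
      using a by (simp add: divide_le_eq mult.commute)
    then have "ennreal (I powr p) \<le> ennreal (a powr (p - 1)) * ennreal B"
      by (simp add: ennreal_mult'[symmetric] ennreal_leI)
    then show ?thesis
      unfolding B I_def .
  qed
qed

lemma Lp_pow_integral_operator_le:
  fixes K :: "real \<Rightarrow> real \<Rightarrow> real" and f :: "real \<Rightarrow> real"
  assumes p: "1 \<le> p" and c: "0 < c"
    and K[measurable]: "(\<lambda>(x, t). K x t) \<in> borel_measurable (lborel \<Otimes>\<^sub>M lborel)"
    and f[measurable]: "f \<in> borel_measurable lborel"
    and rows: "\<And>x. (\<integral>\<^sup>+t. ennreal \<bar>K x t\<bar> \<partial>lborel) \<le> ennreal c"
    and cols: "\<And>t. (\<integral>\<^sup>+x. ennreal \<bar>K x t\<bar> \<partial>lborel) \<le> ennreal c"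
  shows "Lp_pow p (\<lambda>x. \<integral>t. K x t * f t \<partial>lborel) \<le> ennreal (c powr p) * Lp_pow p f"
proof -
  define H where "H x t = ennreal (\<bar>K x t\<bar> * \<bar>f t\<bar> powr p)" for x t
  have K_row[measurable]: "(\<lambda>t. K x t) \<in> borel_measurable borel" for x
    using measurable_Pair2[OF K] by simp
  have pointwise: "ennreal (\<bar>\<integral>t. K x t * f t \<partial>lborel\<bar> powr p)
      \<le> ennreal (c powr (p - 1)) * (\<integral>\<^sup>+t. H x t \<partial>lborel)" for x
  proof -
    have "\<bar>\<integral>t. K x t * f t \<partial>lborel\<bar> \<le> (\<integral>t. \<bar>K x t\<bar> * \<bar>f t\<bar> \<partial>lborel)"
      using integral_norm_bound[of lborel "\<lambda>t. K x t * f t"] by (simp add: abs_mult)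
    then have "ennreal (\<bar>\<integral>t. K x t * f t \<partial>lborel\<bar> powr p)
        \<le> ennreal ((\<integral>t. \<bar>K x t\<bar> * \<bar>f t\<bar> \<partial>lborel) powr p)"
      using p by (intro ennreal_leI powr_mono2) auto
    also have "\<dots> \<le> ennreal (c powr (p - 1)) * (\<integral>\<^sup>+t. H x t \<partial>lborel)"
      unfolding H_def using p c rows by (intro powr_integral_le_weighted) auto
    finally show ?thesis .
  qed
  have "Lp_pow p (\<lambda>x. \<integral>t. K x t * f t \<partial>lborel)
      \<le> (\<integral>\<^sup>+x. ennreal (c powr (p - 1)) * (\<integral>\<^sup>+t. H x t \<partial>lborel) \<partial>lborel)"
    unfolding Lp_pow_def by (intro nn_integral_mono pointwise)
  also have "\<dots> = ennreal (c powr (p - 1)) * (\<integral>\<^sup>+x. (\<integral>\<^sup>+t. H x t \<partial>lborel) \<partial>lborel)"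
    unfolding H_def by (intro nn_integral_cmult) measurable
  also have "(\<integral>\<^sup>+x. (\<integral>\<^sup>+t. H x t \<partial>lborel) \<partial>lborel) = (\<integral>\<^sup>+t. (\<integral>\<^sup>+x. H x t \<partial>lborel) \<partial>lborel)"
    unfolding H_def by (intro lborel_pair.Fubini'[symmetric]) measurable
  also have "ennreal (c powr (p - 1)) * (\<integral>\<^sup>+t. (\<integral>\<^sup>+x. H x t \<partial>lborel) \<partial>lborel)
      \<le> ennreal (c powr (p - 1)) * (\<integral>\<^sup>+t. ennreal c * ennreal (\<bar>f t\<bar> powr p) \<partial>lborel)"
  proof (intro mult_left_mono nn_integral_mono)
    fix t
    have "(\<integral>\<^sup>+x. H x t \<partial>lborel) = (\<integral>\<^sup>+x. ennreal \<bar>K x t\<bar> \<partial>lborel) * ennreal (\<bar>f t\<bar> powr p)"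
      unfolding H_def by (simp add: ennreal_mult nn_integral_multc)
    also have "\<dots> \<le> ennreal c * ennreal (\<bar>f t\<bar> powr p)"
      using cols by (intro mult_right_mono) auto
    finally show "(\<integral>\<^sup>+x. H x t \<partial>lborel) \<le> ennreal c * ennreal (\<bar>f t\<bar> powr p)" .
  qed simp
  also have "\<dots> = ennreal (c powr (p - 1) * c) * Lp_pow p f"
    unfolding Lp_pow_def using c by (simp add: nn_integral_cmult ennreal_mult' mult.assoc)
  also have "c powr (p - 1) * c = c powr p"
    using c by (simp add: powr_diff)
  finally show ?thesis .
qed

lemma integrable_bounded_mult_Lp:
  fixes k f :: "real \<Rightarrow> real"
  assumes p: "1 \<le> p" and k: "integrable lborel k" "\<And>t. \<bar>k t\<bar> \<le> M"
    and f[measurable]: "f \<in> borel_measurable lborel" and f_Lp: "Lp_pow p f < \<infinity>"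
  shows "integrable lborel (\<lambda>t. k t * f t)"
proof (rule Bochner_Integration.integrable_bound)
  have "integrable lborel (\<lambda>t. \<bar>f t\<bar> powr p)"
    using f_Lp unfolding Lp_pow_def by (intro integrableI_nonneg) auto
  then show "integrable lborel (\<lambda>t. \<bar>k t\<bar> + M * \<bar>f t\<bar> powr p)"
    using k by (intro Bochner_Integration.integrable_add integrable_abs integrable_mult_right)
  show "AE t in lborel. norm (k t * f t) \<le> norm (\<bar>k t\<bar> + M * \<bar>f t\<bar> powr p)"
  proof (rule AE_I2)
    fix t
    have "\<bar>f t\<bar> \<le> 1 \<or> \<bar>f t\<bar> \<le> \<bar>f t\<bar> powr p"
      using p powr_mono[of 1 p "\<bar>f t\<bar>"] by fastforce
    then have "\<bar>f t\<bar> \<le> 1 + \<bar>f t\<bar> powr p"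
      by (auto simp: add_increasing add_increasing2)
    then have "\<bar>k t\<bar> * \<bar>f t\<bar> \<le> \<bar>k t\<bar> * (1 + \<bar>f t\<bar> powr p)"
      by (intro mult_left_mono) auto
    then have "\<bar>k t\<bar> * \<bar>f t\<bar> \<le> \<bar>k t\<bar> + \<bar>k t\<bar> * \<bar>f t\<bar> powr p"
      by (simp add: algebra_simps)
    also have "\<dots> \<le> \<bar>k t\<bar> + M * \<bar>f t\<bar> powr p"
      using k(2)[of t] by (simp add: mult_right_mono)
    finally show "norm (k t * f t) \<le> norm (\<bar>k t\<bar> + M * \<bar>f t\<bar> powr p)"
      by (simp add: abs_mult)
  qed
  show "(\<lambda>t. k t * f t) \<in> borel_measurable lborel"
    using borel_measurable_integrable[OF k(1)] by measurable
qed

section \<open>The Green kernel of a principal fundamental system\<close>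

lemma nn_integral_solution_Icc_le:
  assumes q: "AE t in lborel. 1 \<le> q t" and sol: "is_solution q z z'"
    and z: "\<And>t. 0 < z t" and "a \<le> b"
  shows "(\<integral>\<^sup>+t. ennreal (z t) * indicator {a..b} t \<partial>lborel) \<le> ennreal (z' b - z' a)"
proof -
  have qz: "AE t in lborel. z t \<le> q t * z t"
    using q
  proof eventually_elim
    case (elim t)
    show ?case
      using mult_right_mono[OF elim less_imp_le[OF z]] by simp
  qed
  have "(\<integral>\<^sup>+t. ennreal (z t) * indicator {a..b} t \<partial>lborel)
      \<le> (\<integral>\<^sup>+t. ennreal (indicator {a..b} t *\<^sub>R (q t * z t)) \<partial>lborel)"
    using qz by (intro nn_integral_mono_AE, elim AE_mp) (auto intro!: AE_I2 ennreal_leI simp: indicator_def)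
  also have "\<dots> = ennreal (\<integral>t. indicator {a..b} t *\<^sub>R (q t * z t) \<partial>lborel)"
  proof (intro nn_integral_eq_integral)
    show "integrable lborel (\<lambda>t. indicator {a..b} t *\<^sub>R (q t * z t))"
      using sol by (simp add: is_solution_def set_integrable_def)
    show "AE t in lborel. 0 \<le> indicator {a..b} t *\<^sub>R (q t * z t)"
      using qz by (elim AE_mp) (auto intro!: AE_I2 simp: indicator_def intro: order_trans[OF less_imp_le[OF z]])
  qed
  also have "(\<integral>t. indicator {a..b} t *\<^sub>R (q t * z t) \<partial>lborel) = z' b - z' a"
    using sol \<open>a \<le> b\<close> by (simp add: is_solution_def interval_integral_Icc set_lebesgue_integral_def)
  finally show ?thesis .
qed

lemma green_sym: "green u v x t = green u v t x"
  by (auto simp: green_def)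

locale pfss_green =
  fixes q u u' v v' :: "real \<Rightarrow> real"
  assumes admissible: "admissible_q q" and pfss: "PFSS q u u' v v'"
begin

lemma u_pos: "0 < u x" and v_pos: "0 < v x" and u'_neg: "u' x < 0" and v'_pos: "0 < v' x"
  and wronskian: "v' x * u x - u' x * v x = 1"
  using pfss by (auto simp: PFSS_def)

lemma u_solution: "is_solution q u u'" and v_solution: "is_solution q v v'"
  using pfss by (auto simp: PFSS_def)

lemma continuous_u: "continuous_on UNIV u" and continuous_v: "continuous_on UNIV v"
  using u_solution v_solution
  by (auto simp: is_solution_def intro!: continuous_at_imp_continuous_on DERIV_isCont)

lemma u_measurable[measurable]: "u \<in> borel_measurable borel"
  and v_measurable[measurable]: "v \<in> borel_measurable borel"
  using continuous_u continuous_v by (auto intro: borel_measurable_continuous_onI)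

lemma antimono_u: "antimono u"
proof (rule antimonoI)
  fix x y :: real assume "x \<le> y"
  then show "u y \<le> u x"
    using u_solution u'_neg unfolding is_solution_def
    by (metis DERIV_nonpos_imp_nonincreasing less_imp_le)
qed

lemma mono_v: "mono v"
proof (rule monoI)
  fix x y :: real assume "x \<le> y"
  then show "v x \<le> v y"
    using v_solution v'_pos unfolding is_solution_def
    by (metis DERIV_nonneg_imp_nondecreasing less_imp_le)
qed

lemma q_ge_1: "AE t in lborel. 1 \<le> q t"
  using admissible by (simp add: admissible_q_def)

lemma nn_integral_v_atMost: "(\<integral>\<^sup>+t. ennreal (v t) * indicator {..x} t \<partial>lborel) \<le> ennreal (v' x)"
proof (rule nn_integral_atMost_le)
  fix a assume "a \<le> x"
  then have "(\<integral>\<^sup>+t. ennreal (v t) * indicator {a..x} t \<partial>lborel) \<le> ennreal (v' x - v' a)"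
    using q_ge_1 v_solution v_pos by (intro nn_integral_solution_Icc_le)
  also have "\<dots> \<le> ennreal (v' x)"
    using v'_pos[of a] by (intro ennreal_leI) simp
  finally show "(\<integral>\<^sup>+t. ennreal (v t) * indicator {a..x} t \<partial>lborel) \<le> ennreal (v' x)" .
qed measurable

lemma nn_integral_u_atLeast: "(\<integral>\<^sup>+t. ennreal (u t) * indicator {x..} t \<partial>lborel) \<le> ennreal (- u' x)"
proof (rule nn_integral_atLeast_le)
  fix b assume "x \<le> b"
  then have "(\<integral>\<^sup>+t. ennreal (u t) * indicator {x..b} t \<partial>lborel) \<le> ennreal (u' b - u' x)"
    using q_ge_1 u_solution u_pos by (intro nn_integral_solution_Icc_le)
  also have "\<dots> \<le> ennreal (- u' x)"
    using u'_neg[of b] by (intro ennreal_leI) simp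
  finally show "(\<integral>\<^sup>+t. ennreal (u t) * indicator {x..b} t \<partial>lborel) \<le> ennreal (- u' x)" .
qed measurable

lemma green_nonneg: "0 \<le> green u v x t"
  using u_pos v_pos by (simp add: green_def less_imp_le)

lemma green_le_diag: "green u v x t \<le> u x * v x"
  using antimono_u mono_v u_pos v_pos
  by (auto simp: green_def antimonoD monoD intro!: mult_mono less_imp_le)

lemma green_measurable[measurable]:
  "(\<lambda>t. green u v x t) \<in> borel_measurable borel"
  "(\<lambda>x. green u v x t) \<in> borel_measurable borel"
  unfolding green_def by measurable

lemma nn_integral_green_le_1: "(\<integral>\<^sup>+t. ennreal (green u v x t) \<partial>lborel) \<le> 1"
proof -
  have "(\<integral>\<^sup>+t. ennreal (green u v x t) \<partial>lborel)
      = (\<integral>\<^sup>+t. ennreal (u x) * (ennreal (v t) * indicator {..x} t)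
           + ennreal (v x) * (ennreal (u t) * indicator {x<..} t) \<partial>lborel)"
    using u_pos[THEN less_imp_le] v_pos[THEN less_imp_le]
    by (intro nn_integral_cong) (auto simp: green_def indicator_def ennreal_mult mult.commute)
  also have "\<dots> \<le> (\<integral>\<^sup>+t. ennreal (u x) * (ennreal (v t) * indicator {..x} t)
           + ennreal (v x) * (ennreal (u t) * indicator {x..} t) \<partial>lborel)"
    by (intro nn_integral_mono add_left_mono mult_left_mono) (auto simp: indicator_def)
  also have "\<dots> = ennreal (u x) * (\<integral>\<^sup>+t. ennreal (v t) * indicator {..x} t \<partial>lborel)
      + ennreal (v x) * (\<integral>\<^sup>+t. ennreal (u t) * indicator {x..} t \<partial>lborel)"
    by (simp add: nn_integral_add nn_integral_cmult)
  also have "\<dots> \<le> ennreal (u x) * ennreal (v' x) + ennreal (v x) * ennreal (- u' x)"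
    by (intro add_mono mult_left_mono nn_integral_v_atMost nn_integral_u_atLeast) auto
  also have "\<dots> = ennreal (u x * v' x + v x * (- u' x))"
    using u_pos[of x] v_pos[of x] v'_pos[of x] u'_neg[of x]
    by (simp only: ennreal_mult[symmetric] ennreal_plus[symmetric] mult_nonneg_nonneg
        less_imp_le neg_0_le_iff_le)
  also have "u x * v' x + v x * (- u' x) = 1"
    using wronskian[of x] by (simp add: algebra_simps)
  finally show ?thesis
    by simp
qed

lemma integrable_green: "integrable lborel (\<lambda>t. green u v x t)"
  using nn_integral_green_le_1[of x] green_nonneg
  by (intro integrableI_nonneg) (auto intro: order.strict_trans1)

lemma nn_integral_green: "(\<integral>\<^sup>+t. ennreal (green u v x t) \<partial>lborel) = ennreal (\<integral>t. green u v x t \<partial>lborel)"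
  using integrable_green green_nonneg by (intro nn_integral_eq_integral) auto

lemma green_op_shift_diff:
  assumes "1 \<le> p" and [measurable]: "f \<in> borel_measurable lborel" and "Lp_pow p f < \<infinity>"
  shows "green_op u v f (x + \<eta>) - green_op u v f x
    = (\<integral>t. (green u v (x + \<eta>) t - green u v x t) * f t \<partial>lborel)"
proof -
  have "integrable lborel (\<lambda>t. green u v y t * f t)" for y
    using assms green_nonneg green_le_diag
    by (intro integrable_bounded_mult_Lp[where M = "u y * v y"] integrable_green) auto
  then show ?thesis
    unfolding green_op_def by (simp add: left_diff_distrib)
qed

end

section \<open>Translations of the Green kernel\<close>

definition shift_row_norm :: "(real \<Rightarrow> real) \<Rightarrow> (real \<Rightarrow> real) \<Rightarrow> real \<Rightarrow> real \<Rightarrow> ennreal" where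
  "shift_row_norm u v \<eta> x = (\<integral>\<^sup>+t. ennreal \<bar>green u v (x + \<eta>) t - green u v x t\<bar> \<partial>lborel)"

definition shift_col_norm :: "(real \<Rightarrow> real) \<Rightarrow> (real \<Rightarrow> real) \<Rightarrow> real \<Rightarrow> real \<Rightarrow> ennreal" where
  "shift_col_norm u v \<eta> t = (\<integral>\<^sup>+x. ennreal \<bar>green u v (x + \<eta>) t - green u v x t\<bar> \<partial>lborel)"

context pfss_green
begin

lemma green_shift_diff_le:
  assumes "0 < \<eta>"
  shows "\<bar>green u v (x + \<eta>) t - green u v x t\<bar>
    \<le> (u x - u (x + \<eta>)) * (v t * indicator {..x} t)
      + (v (x + \<eta>) - v x) * (u t * indicator {x + \<eta>..} t)
      + u t * v t * indicator {x<..<x + \<eta>} t"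
proof -
  have u: "u (x + \<eta>) \<le> u x" and v: "v x \<le> v (x + \<eta>)"
    using assms antimono_u mono_v by (auto simp: antimonoD monoD)
  consider "t \<le> x" | "x + \<eta> \<le> t" | "x < t" "t < x + \<eta>"
    by linarith
  then show ?thesis
  proof cases
    case 1
    then have "\<bar>green u v (x + \<eta>) t - green u v x t\<bar> = (u x - u (x + \<eta>)) * (v t * indicator {..x} t)"
      using assms u v_pos[of t] by (simp add: green_def left_diff_distrib)
    with 1 show ?thesis
      using assms v u_pos[of t] by (simp add: indicator_def)
  next
    case 2
    then have "\<bar>green u v (x + \<eta>) t - green u v x t\<bar> = (v (x + \<eta>) - v x) * (u t * indicator {x + \<eta>..} t)"
      using assms v u_pos[of t] by (cases "t = x + \<eta>") (auto simp: green_def algebra_simps)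
    with 2 show ?thesis
      using assms u v_pos[of t] by (simp add: indicator_def)
  next
    case 3
    have "u (x + \<eta>) \<le> u t" "v x \<le> v t"
      using 3 antimono_u mono_v by (auto simp: antimonoD monoD)
    then have "u (x + \<eta>) * v t \<le> u t * v t" "u t * v x \<le> u t * v t"
      using u_pos v_pos by (auto intro: mult_right_mono mult_left_mono less_imp_le)
    moreover have "0 \<le> u (x + \<eta>) * v t" "0 \<le> u t * v x"
      using u_pos v_pos by (auto intro: less_imp_le)
    moreover have "green u v (x + \<eta>) t = u (x + \<eta>) * v t" "green u v x t = u t * v x"
      using 3 by (auto simp: green_def)
    ultimately have "\<bar>green u v (x + \<eta>) t - green u v x t\<bar> \<le> u t * v t * indicator {x<..<x + \<eta>} t"
      using 3 by (simp add: indicator_def abs_le_iff)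
    with 3 show ?thesis
      using u v u_pos[of t] v_pos[of t] by (simp add: indicator_def)
  qed
qed

lemma shift_row_norm_le:
  assumes "0 < \<eta>" "a \<le> x" "x \<le> b"
  shows "shift_row_norm u v \<eta> x
    \<le> ennreal ((u x - u (x + \<eta>)) * v' b + (v (x + \<eta>) - v x) * (- u' a) + u x * v (x + \<eta>) * \<eta>)"
  unfolding shift_row_norm_def
proof (rule nn_integral_abs_le_sum3)
  fix t
  have "u t * v t * indicator {x<..<x + \<eta>} t \<le> u x * v (x + \<eta>) * indicator {x<..<x + \<eta>} t"
    using antimono_u mono_v u_pos v_pos
    by (auto simp: indicator_def antimonoD monoD less_imp_le intro!: mult_mono)
  then show "\<bar>green u v (x + \<eta>) t - green u v x t\<bar>
    \<le> (u x - u (x + \<eta>)) * (v t * indicator {..x} t)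
      + (v (x + \<eta>) - v x) * (u t * indicator {x + \<eta>..} t)
      + u x * v (x + \<eta>) * indicator {x<..<x + \<eta>} t"
    using green_shift_diff_le[OF \<open>0 < \<eta>\<close>, of x t] by linarith
next
  have "(\<integral>\<^sup>+t. ennreal (v t * indicator {..x} t) \<partial>lborel) \<le> (\<integral>\<^sup>+t. ennreal (v t) * indicator {..b} t \<partial>lborel)"
    using \<open>x \<le> b\<close> by (intro nn_integral_mono) (simp add: indicator_def)
  also have "\<dots> \<le> ennreal (v' b)"
    by (rule nn_integral_v_atMost)
  finally show "(\<integral>\<^sup>+t. ennreal (v t * indicator {..x} t) \<partial>lborel) \<le> ennreal (v' b)" .
next
  have "(\<integral>\<^sup>+t. ennreal (u t * indicator {x + \<eta>..} t) \<partial>lborel) \<le> (\<integral>\<^sup>+t. ennreal (u t) * indicator {a..} t \<partial>lborel)"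
    using assms by (intro nn_integral_mono) (simp add: indicator_def)
  also have "\<dots> \<le> ennreal (- u' a)"
    by (rule nn_integral_u_atLeast)
  finally show "(\<integral>\<^sup>+t. ennreal (u t * indicator {x + \<eta>..} t) \<partial>lborel) \<le> ennreal (- u' a)" .
next
  show "(\<integral>\<^sup>+t. ennreal (indicator {x<..<x + \<eta>} t) \<partial>lborel) \<le> ennreal \<eta>"
    using assms by (simp add: ennreal_indicator)
qed (use assms antimono_u mono_v u_pos v_pos v'_pos u'_neg in \<open>auto simp: indicator_def antimonoD monoD less_imp_le\<close>)

lemma shift_col_norm_le:
  assumes "0 < \<eta>"
  shows "shift_col_norm u v \<eta> t \<le> ennreal (3 * \<eta> * (u t * v t))"
proof -
  have "shift_col_norm u v \<eta> t
      \<le> ennreal (v t * (\<eta> * u t) + u t * (\<eta> * v (t - \<eta> + \<eta>)) + u t * v t * \<eta>)"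
    unfolding shift_col_norm_def
  proof (rule nn_integral_abs_le_sum3)
    show "\<bar>green u v (x + \<eta>) t - green u v x t\<bar>
      \<le> v t * ((u x - u (x + \<eta>)) * indicator {t..} x)
        + u t * ((v (x + \<eta>) - v x) * indicator {..t - \<eta>} x)
        + u t * v t * indicator {t - \<eta><..<t} x" for x
    proof -
      have "indicator {..x} t = (indicator {t..} x :: real)"
        "indicator {x + \<eta>..} t = (indicator {..t - \<eta>} x :: real)"
        "indicator {x<..<x + \<eta>} t = (indicator {t - \<eta><..<t} x :: real)"
        by (auto simp: indicator_def)
      then show ?thesis
        using green_shift_diff_le[OF \<open>0 < \<eta>\<close>, of x t] by (simp add: mult_ac)
    qed
    show "(\<integral>\<^sup>+x. ennreal ((u x - u (x + \<eta>)) * indicator {t..} x) \<partial>lborel) \<le> ennreal (\<eta> * u t)"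
      using nn_integral_antimono_shift_diff_le[OF u_measurable antimono_u _ _ less_imp_le[OF assms], of t]
        nn_integral_u_atLeast[of t] u_pos by (simp add: ennreal_mult_indicator less_imp_le order.strict_trans1)
    show "(\<integral>\<^sup>+x. ennreal ((v (x + \<eta>) - v x) * indicator {..t - \<eta>} x) \<partial>lborel)
        \<le> ennreal (\<eta> * v (t - \<eta> + \<eta>))"
      using nn_integral_mono_shift_diff_le[OF v_measurable mono_v _ _ less_imp_le[OF assms], of "t - \<eta>"]
        nn_integral_v_atMost[of "t - \<eta>"] v_pos by (simp add: ennreal_mult_indicator less_imp_le order.strict_trans1)
    show "(\<integral>\<^sup>+x. ennreal (indicator {t - \<eta><..<t} x) \<partial>lborel) \<le> ennreal \<eta>"
      using assms by (simp add: ennreal_indicator)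
  qed (use assms antimono_u mono_v u_pos v_pos in \<open>auto simp: indicator_def antimonoD monoD less_imp_le\<close>)
  then show ?thesis
    by (simp add: algebra_simps)
qed

lemma abs_green_diff_le: "\<bar>green u v y s - green u v x t\<bar> \<le> green u v y s + green u v x t"
  using green_nonneg[of y s] green_nonneg[of x t] by linarith

lemma shift_row_norm_le_green:
  "shift_row_norm u v \<eta> x \<le> ennreal (\<integral>t. green u v (x + \<eta>) t \<partial>lborel) + ennreal (\<integral>t. green u v x t \<partial>lborel)"
proof -
  have "shift_row_norm u v \<eta> x
      \<le> (\<integral>\<^sup>+t. ennreal (green u v (x + \<eta>) t) + ennreal (green u v x t) \<partial>lborel)"
    unfolding shift_row_norm_def using green_nonneg abs_green_diff_le
    by (intro nn_integral_mono) (simp add: ennreal_leI flip: ennreal_plus)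
  also have "\<dots> = ennreal (\<integral>t. green u v (x + \<eta>) t \<partial>lborel) + ennreal (\<integral>t. green u v x t \<partial>lborel)"
    by (simp add: nn_integral_add nn_integral_green)
  finally show ?thesis .
qed

lemma shift_col_norm_le_green: "shift_col_norm u v \<eta> t \<le> 2 * ennreal (\<integral>x. green u v t x \<partial>lborel)"
proof -
  have "shift_col_norm u v \<eta> t
      \<le> (\<integral>\<^sup>+x. ennreal (green u v (x + \<eta>) t) + ennreal (green u v x t) \<partial>lborel)"
    unfolding shift_col_norm_def using green_nonneg abs_green_diff_le
    by (intro nn_integral_mono) (simp add: ennreal_leI flip: ennreal_plus)
  also have "\<dots> = (\<integral>\<^sup>+x. ennreal (green u v (x + \<eta>) t) \<partial>lborel) + (\<integral>\<^sup>+x. ennreal (green u v x t) \<partial>lborel)"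
    by (simp add: nn_integral_add)
  also have "(\<integral>\<^sup>+x. ennreal (green u v (x + \<eta>) t) \<partial>lborel) = (\<integral>\<^sup>+x. ennreal (green u v x t) \<partial>lborel)"
    by (rule nn_integral_lborel_shift) measurable
  also have "(\<integral>\<^sup>+x. ennreal (green u v x t) \<partial>lborel) = ennreal (\<integral>x. green u v t x \<partial>lborel)"
    by (simp add: green_sym[of u v _ t] nn_integral_green)
  finally show ?thesis
    by (simp add: mult_2)
qed

lemma shift_row_norm_uminus: "shift_row_norm u v (- \<eta>) x = shift_row_norm u v \<eta> (x - \<eta>)"
  unfolding shift_row_norm_def by (simp add: abs_minus_commute)

lemma shift_col_norm_uminus: "shift_col_norm u v (- \<eta>) t = shift_col_norm u v \<eta> t"
proof -
  have "(\<integral>\<^sup>+x. ennreal \<bar>green u v (x + \<eta> - \<eta>) t - green u v (x + \<eta>) t\<bar> \<partial>lborel)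
      = (\<integral>\<^sup>+x. ennreal \<bar>green u v (x - \<eta>) t - green u v x t\<bar> \<partial>lborel)"
    by (rule nn_integral_lborel_shift[where F = "\<lambda>x. ennreal \<bar>green u v (x - \<eta>) t - green u v x t\<bar>"])
      measurable
  then show ?thesis
    unfolding shift_col_norm_def by (simp add: abs_minus_commute)
qed

lemma shift_row_norm_small_near:
  assumes "0 < \<epsilon>"
  obtains \<delta> where "0 < \<delta>" "\<And>\<eta> x. 0 < \<eta> \<Longrightarrow> \<eta> < \<delta> \<Longrightarrow> \<bar>x\<bar> \<le> R \<Longrightarrow> shift_row_norm u v \<eta> x \<le> ennreal \<epsilon>"
proof -
  define C where "C = v' R - u' (-R) + u (-R) * v (R + 1) + 1"
  have "0 < C"
    unfolding C_def using v'_pos[of R] u'_neg[of "-R"] mult_pos_pos[OF u_pos v_pos, of "-R" "R + 1"] by simp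
  define e where "e = \<epsilon> / (3 * C)"
  have "0 < e"
    unfolding e_def using \<open>0 < \<epsilon>\<close> \<open>0 < C\<close> by simp
  obtain \<delta>u where "0 < \<delta>u" and \<delta>u: "\<And>x \<eta>. \<bar>x\<bar> \<le> R \<Longrightarrow> \<bar>\<eta>\<bar> < \<delta>u \<Longrightarrow> \<bar>u (x + \<eta>) - u x\<bar> < e"
    using continuous_shift_uniformly_small[OF continuous_u \<open>0 < e\<close>] by blast
  obtain \<delta>v where "0 < \<delta>v" and \<delta>v: "\<And>x \<eta>. \<bar>x\<bar> \<le> R \<Longrightarrow> \<bar>\<eta>\<bar> < \<delta>v \<Longrightarrow> \<bar>v (x + \<eta>) - v x\<bar> < e"
    using continuous_shift_uniformly_small[OF continuous_v \<open>0 < e\<close>] by blast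
  show ?thesis
  proof (rule that[of "min (min \<delta>u \<delta>v) (min 1 e)"])
    show "0 < min (min \<delta>u \<delta>v) (min 1 e)"
      using \<open>0 < \<delta>u\<close> \<open>0 < \<delta>v\<close> \<open>0 < e\<close> by simp
    fix \<eta> x assume "0 < \<eta>" "\<eta> < min (min \<delta>u \<delta>v) (min 1 e)" "\<bar>x\<bar> \<le> R"
    then have small: "u x - u (x + \<eta>) \<le> e" "v (x + \<eta>) - v x \<le> e" "\<eta> \<le> e"
      using \<delta>u[of x \<eta>] \<delta>v[of x \<eta>] by auto
    have mono: "0 \<le> u x - u (x + \<eta>)" "0 \<le> v (x + \<eta>) - v x" "u x \<le> u (-R)" "v (x + \<eta>) \<le> v (R + 1)"
      using \<open>0 < \<eta>\<close> \<open>\<eta> < min (min \<delta>u \<delta>v) (min 1 e)\<close> \<open>\<bar>x\<bar> \<le> R\<close> antimono_u mono_v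
      by (auto simp: antimonoD monoD)
    have "u x * v (x + \<eta>) \<le> u (-R) * v (R + 1)"
      using mono u_pos v_pos by (intro mult_mono) (auto intro: less_imp_le)
    then have bounds: "v' R \<le> C" "- u' (-R) \<le> C" "u x * v (x + \<eta>) \<le> C"
      unfolding C_def using v'_pos[of R] u'_neg[of "-R"] mult_pos_pos[OF u_pos v_pos, of "-R" "R + 1"]
      by auto
    have "(u x - u (x + \<eta>)) * v' R + (v (x + \<eta>) - v x) * (- u' (-R)) + u x * v (x + \<eta>) * \<eta>
        \<le> e * C + e * C + C * e"
      using small mono bounds v'_pos[of R] u'_neg[of "-R"] u_pos[of x] v_pos[of "x + \<eta>"] \<open>0 < \<eta>\<close>
      by (intro add_mono mult_mono) auto
    also have "\<dots> = \<epsilon>"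
      unfolding e_def using \<open>0 < C\<close> by simp
    finally have "ennreal ((u x - u (x + \<eta>)) * v' R + (v (x + \<eta>) - v x) * (- u' (-R)) + u x * v (x + \<eta>) * \<eta>)
        \<le> ennreal \<epsilon>"
      by (rule ennreal_leI)
    moreover have "-R \<le> x" "x \<le> R"
      using \<open>\<bar>x\<bar> \<le> R\<close> by auto
    ultimately show "shift_row_norm u v \<eta> x \<le> ennreal \<epsilon>"
      using shift_row_norm_le[OF \<open>0 < \<eta>\<close>] order_trans by blast
  qed
qed

lemma shift_col_norm_small_near:
  assumes "0 < \<epsilon>"
  obtains \<delta> where "0 < \<delta>" "\<And>\<eta> t. 0 < \<eta> \<Longrightarrow> \<eta> < \<delta> \<Longrightarrow> \<bar>t\<bar> \<le> R \<Longrightarrow> shift_col_norm u v \<eta> t \<le> ennreal \<epsilon>"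
proof -
  define M where "M = u (-R) * v R"
  have "0 < M"
    unfolding M_def using u_pos v_pos by simp
  show ?thesis
  proof (rule that[of "\<epsilon> / (3 * M)"])
    show "0 < \<epsilon> / (3 * M)"
      using \<open>0 < \<epsilon>\<close> \<open>0 < M\<close> by simp
    fix \<eta> t assume "0 < \<eta>" "\<eta> < \<epsilon> / (3 * M)" "\<bar>t\<bar> \<le> R"
    then have "u t * v t \<le> M"
      unfolding M_def using antimono_u mono_v u_pos v_pos
      by (intro mult_mono) (auto simp: antimonoD monoD less_imp_le)
    then have "3 * \<eta> * (u t * v t) \<le> 3 * \<eta> * M"
      using \<open>0 < \<eta>\<close> by simp
    also have "\<dots> \<le> \<epsilon>"
      using \<open>\<eta> < \<epsilon> / (3 * M)\<close> \<open>0 < M\<close> by (simp add: field_simps)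
    finally show "shift_col_norm u v \<eta> t \<le> ennreal \<epsilon>"
      using shift_col_norm_le[OF \<open>0 < \<eta>\<close>, of t] by (auto intro: order_trans ennreal_leI)
  qed
qed

lemma shift_norms_small_pos:
  assumes decay: "((\<lambda>x. \<integral>t. green u v x t \<partial>lborel) \<longlongrightarrow> 0) at_infinity" and "0 < \<epsilon>"
  obtains \<delta> where "0 < \<delta>"
    "\<And>\<eta> x. 0 < \<eta> \<Longrightarrow> \<eta> < \<delta> \<Longrightarrow> shift_row_norm u v \<eta> x \<le> ennreal \<epsilon>"
    "\<And>\<eta> t. 0 < \<eta> \<Longrightarrow> \<eta> < \<delta> \<Longrightarrow> shift_col_norm u v \<eta> t \<le> ennreal \<epsilon>"
proof -
  have "\<forall>\<^sub>F x in at_infinity. dist (\<integral>t. green u v x t \<partial>lborel) 0 < \<epsilon> / 2"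
    using tendstoD[OF decay, of "\<epsilon> / 2"] \<open>0 < \<epsilon>\<close> by simp
  then obtain R where R: "\<And>x. R \<le> \<bar>x\<bar> \<Longrightarrow> \<bar>\<integral>t. green u v x t \<partial>lborel\<bar> < \<epsilon> / 2"
    unfolding eventually_at_infinity dist_real_def by auto
  have far: "ennreal (\<integral>t. green u v x t \<partial>lborel) \<le> ennreal (\<epsilon> / 2)" if "R \<le> \<bar>x\<bar>" for x
    using R[OF that] by (intro ennreal_leI) (simp add: abs_less_iff)
  have half: "ennreal (\<epsilon> / 2) + ennreal (\<epsilon> / 2) = ennreal \<epsilon>"
    using \<open>0 < \<epsilon>\<close> by (simp flip: ennreal_plus)
  obtain \<delta>1 where "0 < \<delta>1"
    and row_near: "\<And>\<eta> x. 0 < \<eta> \<Longrightarrow> \<eta> < \<delta>1 \<Longrightarrow> \<bar>x\<bar> \<le> R + 1 \<Longrightarrow> shift_row_norm u v \<eta> x \<le> ennreal \<epsilon>"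
    using shift_row_norm_small_near[OF \<open>0 < \<epsilon>\<close>] by blast
  obtain \<delta>2 where "0 < \<delta>2"
    and col_near: "\<And>\<eta> t. 0 < \<eta> \<Longrightarrow> \<eta> < \<delta>2 \<Longrightarrow> \<bar>t\<bar> \<le> R \<Longrightarrow> shift_col_norm u v \<eta> t \<le> ennreal \<epsilon>"
    using shift_col_norm_small_near[OF \<open>0 < \<epsilon>\<close>] by blast
  show ?thesis
  proof (rule that[of "min 1 (min \<delta>1 \<delta>2)"])
    show "0 < min 1 (min \<delta>1 \<delta>2)"
      using \<open>0 < \<delta>1\<close> \<open>0 < \<delta>2\<close> by simp
  next
    fix \<eta> x assume \<eta>: "0 < \<eta>" "\<eta> < min 1 (min \<delta>1 \<delta>2)"
    show "shift_row_norm u v \<eta> x \<le> ennreal \<epsilon>"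
    proof (cases "\<bar>x\<bar> \<le> R + 1")
      case False
      then have "R \<le> \<bar>x + \<eta>\<bar>" "R \<le> \<bar>x\<bar>"
        using \<eta> by auto
      then have "ennreal (\<integral>t. green u v (x + \<eta>) t \<partial>lborel) + ennreal (\<integral>t. green u v x t \<partial>lborel)
          \<le> ennreal \<epsilon>"
        unfolding half[symmetric] by (intro add_mono far)
      then show ?thesis
        using shift_row_norm_le_green[of \<eta> x] by (rule order_trans[rotated])
    qed (use \<eta> row_near in auto)
  next
    fix \<eta> t assume \<eta>: "0 < \<eta>" "\<eta> < min 1 (min \<delta>1 \<delta>2)"
    show "shift_col_norm u v \<eta> t \<le> ennreal \<epsilon>"
    proof (cases "\<bar>t\<bar> \<le> R")
      case False
      then have "2 * ennreal (\<integral>x. green u v t x \<partial>lborel) \<le> ennreal \<epsilon>"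
        unfolding mult_2 half[symmetric] by (intro add_mono far) auto
      then show ?thesis
        using shift_col_norm_le_green[of \<eta> t] by (rule order_trans[rotated])
    qed (use \<eta> col_near in auto)
  qed
qed

lemma shift_norms_small:
  assumes decay: "((\<lambda>x. \<integral>t. green u v x t \<partial>lborel) \<longlongrightarrow> 0) at_infinity" and "0 < \<epsilon>"
  obtains \<delta> where "0 < \<delta>"
    "\<And>\<eta> x. \<bar>\<eta>\<bar> < \<delta> \<Longrightarrow> shift_row_norm u v \<eta> x \<le> ennreal \<epsilon>"
    "\<And>\<eta> t. \<bar>\<eta>\<bar> < \<delta> \<Longrightarrow> shift_col_norm u v \<eta> t \<le> ennreal \<epsilon>"
proof -
  obtain \<delta> where "0 < \<delta>"
    and rows: "\<And>\<eta> x. 0 < \<eta> \<Longrightarrow> \<eta> < \<delta> \<Longrightarrow> shift_row_norm u v \<eta> x \<le> ennreal \<epsilon>"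
    and cols: "\<And>\<eta> t. 0 < \<eta> \<Longrightarrow> \<eta> < \<delta> \<Longrightarrow> shift_col_norm u v \<eta> t \<le> ennreal \<epsilon>"
    using shift_norms_small_pos[OF assms] by blast
  show ?thesis
  proof (rule that[OF \<open>0 < \<delta>\<close>])
    fix \<eta> x assume "\<bar>\<eta>\<bar> < \<delta>"
    then consider "0 < \<eta>" "\<eta> < \<delta>" | "\<eta> = 0" | "0 < - \<eta>" "- \<eta> < \<delta>"
      by linarith
    then show "shift_row_norm u v \<eta> x \<le> ennreal \<epsilon>"
    proof cases
      case 1
      then show ?thesis
        by (rule rows)
    next
      case 2
      then show ?thesis
        by (simp add: shift_row_norm_def)
    next
      case 3
      then show ?thesis
        using rows[of "- \<eta>" "x + \<eta>"] shift_row_norm_uminus[of "- \<eta>" x] by simp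
    qed
  next
    fix \<eta> t assume "\<bar>\<eta>\<bar> < \<delta>"
    then consider "0 < \<eta>" "\<eta> < \<delta>" | "\<eta> = 0" | "0 < - \<eta>" "- \<eta> < \<delta>"
      by linarith
    then show "shift_col_norm u v \<eta> t \<le> ennreal \<epsilon>"
    proof cases
      case 1
      then show ?thesis
        by (rule cols)
    next
      case 2
      then show ?thesis
        by (simp add: shift_col_norm_def)
    next
      case 3
      then show ?thesis
        using cols[of "- \<eta>" t] shift_col_norm_uminus[of "- \<eta>" t] by simp
    qed
  qed
qed

lemma Lp_pow_green_op_shift_diff_le:
  assumes "1 \<le> p" "0 < \<epsilon>" and f[measurable]: "f \<in> borel_measurable lborel" and "Lp_pow p f < \<infinity>"
    and rows: "\<And>x. shift_row_norm u v \<eta> x \<le> ennreal \<epsilon>"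
    and cols: "\<And>t. shift_col_norm u v \<eta> t \<le> ennreal \<epsilon>"
  shows "Lp_pow p (\<lambda>x. green_op u v f (x + \<eta>) - green_op u v f x) \<le> ennreal (\<epsilon> powr p) * Lp_pow p f"
proof -
  have K: "(\<lambda>(x, t). green u v (x + \<eta>) t - green u v x t) \<in> borel_measurable (lborel \<Otimes>\<^sub>M lborel)"
    unfolding green_def by measurable
  have "Lp_pow p (\<lambda>x. \<integral>t. (green u v (x + \<eta>) t - green u v x t) * f t \<partial>lborel)
      \<le> ennreal (\<epsilon> powr p) * Lp_pow p f"
    using rows cols unfolding shift_row_norm_def shift_col_norm_def
    by (rule Lp_pow_integral_operator_le[OF assms(1,2) K f])
  then show ?thesis
    using assms by (simp add: green_op_shift_diff)
qed

end

theorem lemma5p5: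
  fixes q u u' v v' :: "real \<Rightarrow> real" and p :: real
  assumes "admissible_q q"
    and "PFSS q u u' v v'"
    and "1 \<le> p"
    and "((\<lambda>x. \<integral>t. green u v x t \<partial>lborel) \<longlongrightarrow> 0) at_infinity"
  shows "\<forall>\<epsilon>>0. \<exists>\<delta>>0. \<forall>\<eta>. \<bar>\<eta>\<bar> < \<delta> \<longrightarrow>
           (\<forall>f. f \<in> borel_measurable lborel \<and> Lp_pow p f \<le> 1 \<longrightarrow>
              Lp_pow p (\<lambda>x. green_op u v f (x + \<eta>) - green_op u v f x) \<le> ennreal (\<epsilon> powr p))"
proof (intro allI impI)
  fix \<epsilon> :: real assume "0 < \<epsilon>"
  interpret pfss_green q u u' v v'
    using assms(1,2) by unfold_locales
  obtain \<delta> where "0 < \<delta>"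
    and rows: "\<And>\<eta> x. \<bar>\<eta>\<bar> < \<delta> \<Longrightarrow> shift_row_norm u v \<eta> x \<le> ennreal \<epsilon>"
    and cols: "\<And>\<eta> t. \<bar>\<eta>\<bar> < \<delta> \<Longrightarrow> shift_col_norm u v \<eta> t \<le> ennreal \<epsilon>"
    using shift_norms_small[OF assms(4) \<open>0 < \<epsilon>\<close>] by blast
  have "Lp_pow p (\<lambda>x. green_op u v f (x + \<eta>) - green_op u v f x) \<le> ennreal (\<epsilon> powr p)"
    if "\<bar>\<eta>\<bar> < \<delta>" "f \<in> borel_measurable lborel" "Lp_pow p f \<le> 1" for \<eta> f
  proof -
    have "Lp_pow p f < \<infinity>"
      using order.strict_trans1[OF \<open>Lp_pow p f \<le> 1\<close>] by simp
    then have "Lp_pow p (\<lambda>x. green_op u v f (x + \<eta>) - green_op u v f x) \<le> ennreal (\<epsilon> powr p) * Lp_pow p f"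
      using assms(3) \<open>0 < \<epsilon>\<close> that(1,2) rows cols by (intro Lp_pow_green_op_shift_diff_le)
    also have "\<dots> \<le> ennreal (\<epsilon> powr p)"
      using \<open>Lp_pow p f \<le> 1\<close> mult_left_mono[of _ 1 "ennreal (\<epsilon> powr p)"] by simp
    finally show ?thesis .
  qed
  with \<open>0 < \<delta>\<close> show "\<exists>\<delta>>0. \<forall>\<eta>. \<bar>\<eta>\<bar> < \<delta> \<longrightarrow>
           (\<forall>f. f \<in> borel_measurable lborel \<and> Lp_pow p f \<le> 1 \<longrightarrow>
              Lp_pow p (\<lambda>x. green_op u v f (x + \<eta>) - green_op u v f x) \<le> ennreal (\<epsilon> powr p))"
    by blast
qed

end
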